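(* For every integer $n\ge 1$, the set \[U_n=\{t_it_{n+j}-t_jt_{n+i} : 1\le i<j\le n\}\] is a universal Gröbner basis of the toric ideal $I_{S_n}$, i.e. it is a Gröbner basis of $I_{S_n}$ with respect to every monomial order.
   Context: With $e_i\in\mathbb{R}^{n+1}$ the standard basis vectors, let $s_i=e_1+e_{i+1}+e_{n+1}$ for $1\le i<n$, $s_n=e_1+e_{n+1}$, $s_i=e_{i+1-n}+e_{n+1}$ for $n<i<2n$, $s_{2n}=e_{n+1}$ (the nonzero codewords of the homogeneous star code $S_n$). The toric ideal $I_{S_n}$ is the kernel of the ring homomorphism $\mathbb{C}[t_1,\dots,t_{2n}]\to\mathbb{C}[x_1,\dots,x_{n+1}]$, $t_i\mapsto x^{s_i}$, where $x^a=x_1^{a_1}\cdots x_{n+1}^{a_{n+1}}$. *)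

theory Defs
  imports Complex_Main "HOL-Library.Poly_Mapping"
begin

text \<open>Multivariate polynomials over the complex numbers, represented as finitely
  supported maps from exponent vectors (monomials, finitely supported maps
  nat to nat; variable k has index k) to coefficients.\<close>

type_synonym mon = "nat \<Rightarrow>\<^sub>0 nat"
type_synonym cpoly = "mon \<Rightarrow>\<^sub>0 complex"

definition ev :: "nat \<Rightarrow> mon" where
  "ev k = Poly_Mapping.single k 1"

definition scode :: "nat \<Rightarrow> nat \<Rightarrow> mon" where
  "scode n i =
     (if 1 \<le> i \<and> i < n then ev 1 + ev (i+1) + ev (n+1)
      else if i = n then ev 1 + ev (n+1)
      else if n < i \<and> i < 2*n then ev (i+1-n) + ev (n+1)
      else ev (n+1))"

definition var :: "nat \<Rightarrow> cpoly" where
  "var i = Poly_Mapping.single (ev i) 1"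

definition polys_in :: "nat \<Rightarrow> cpoly set" where
  "polys_in m = {f::cpoly. \<forall>a::mon. a \<in> Poly_Mapping.keys f \<longrightarrow> Poly_Mapping.keys a \<subseteq> {1..m}}"

definition toric_hom :: "nat \<Rightarrow> cpoly \<Rightarrow> cpoly" where
  "toric_hom n f =
     (\<Sum>a\<in>Poly_Mapping.keys f. Poly_Mapping.single 0 (Poly_Mapping.lookup f a) *
        (\<Prod>i\<in>{1..2*n}. (Poly_Mapping.single (scode n i) 1) ^ Poly_Mapping.lookup a i))"

definition toric_ideal :: "nat \<Rightarrow> cpoly set" where
  "toric_ideal n = {f \<in> polys_in (2*n). toric_hom n f = 0}"

definition U :: "nat \<Rightarrow> cpoly set" where
  "U n = {var i * var (n+j) - var j * var (n+i) | i j. 1 \<le> i \<and> i < j \<and> j \<le> n}"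

definition monomial_order :: "nat set \<Rightarrow> (mon \<Rightarrow> mon \<Rightarrow> bool) \<Rightarrow> bool" where
  "monomial_order V le \<longleftrightarrow>
     (let M = {a. Poly_Mapping.keys a \<subseteq> V} in
       (\<forall>a\<in>M. le a a) \<and>
       (\<forall>a\<in>M. \<forall>b\<in>M. le a b \<and> le b a \<longrightarrow> a = b) \<and>
       (\<forall>a\<in>M. \<forall>b\<in>M. \<forall>c\<in>M. le a b \<and> le b c \<longrightarrow> le a c) \<and>
       (\<forall>a\<in>M. \<forall>b\<in>M. le a b \<or> le b a) \<and>
       (\<forall>a\<in>M. \<forall>b\<in>M. \<forall>c\<in>M. le a b \<longrightarrow> le (a + c) (b + c)) \<and>
       (\<forall>S\<subseteq>M. S \<noteq> {} \<longrightarrow> (\<exists>a\<in>S. \<forall>b\<in>S. le a b)))"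

definition lead_mon :: "(mon \<Rightarrow> mon \<Rightarrow> bool) \<Rightarrow> cpoly \<Rightarrow> mon" where
  "lead_mon le f = (THE a. a \<in> Poly_Mapping.keys f \<and> (\<forall>b\<in>Poly_Mapping.keys f. le b a))"

definition mon_dvd :: "mon \<Rightarrow> mon \<Rightarrow> bool" where
  "mon_dvd a b \<longleftrightarrow> (\<exists>c. b = a + c)"

definition groebner_basis :: "(mon \<Rightarrow> mon \<Rightarrow> bool) \<Rightarrow> cpoly set \<Rightarrow> cpoly set \<Rightarrow> bool" where
  "groebner_basis le I G \<longleftrightarrow>
     finite G \<and> G \<subseteq> I \<and>
     (\<forall>f\<in>I. f \<noteq> 0 \<longrightarrow> (\<exists>g\<in>G. g \<noteq> 0 \<and> mon_dvd (lead_mon le g) (lead_mon le f)))"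

definition universal_groebner_basis :: "nat set \<Rightarrow> cpoly set \<Rightarrow> cpoly set \<Rightarrow> bool" where
  "universal_groebner_basis V I G \<longleftrightarrow>
     (\<forall>le. monomial_order V le \<longrightarrow> groebner_basis le I G)"

end

(*
  Read t^a as a 2 x n table with top row (a_1, ..., a_n) and bottom row
  (a_(n+1), ..., a_2n); the image x^(a_1 s_1 + ... + a_2n s_2n) records exactly its
  column sums and its top row sum. The terms of an element f of the kernel cancel
  within these fibres, so the leading monomial t^a of f shares its fibre with a
  smaller monomial, hence with the least monomial t^b of the fibre. As a <> b have
  the same margins, there are i, j with a_i > b_i and a_j < b_j; then t_i t_(n+j)
  divides t^a and t_j t_(n+i) divides t^b. Trading t_j t_(n+i) for t_i t_(n+j) in
  t^b stays in the fibre, so minimality of t^b forces t_j t_(n+i) < t_i t_(n+j):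
  the leading monomial of the element +-(t_i t_(n+j) - t_j t_(n+i)) of U_n divides
  t^a.
*)
theory Submission
  imports Defs
begin

alias keys = Poly_Mapping.keys
alias lookup = Poly_Mapping.lookup
alias single = Poly_Mapping.single

lemma lead_mon_uminus: "lead_mon le (- f) = lead_mon le f"
  by (simp add: lead_mon_def)

lemma keys_binomial:
  assumes "p \<noteq> q"
  shows "keys (single p (1::complex) - single q 1) = {p, q}"
  using assms by (auto simp: in_keys_iff lookup_minus lookup_single when_def split: if_splits)

context
  fixes V :: "nat set" and le :: "mon \<Rightarrow> mon \<Rightarrow> bool"
  assumes mo: "monomial_order V le"
begin

lemmas monomial_order_conjuncts = mo[unfolded monomial_order_def Let_def mem_Collect_eq]

lemma monomial_order_refl: "keys a \<subseteq> V \<Longrightarrow> le a a"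
  using monomial_order_conjuncts[THEN conjunct1] by blast

lemma monomial_order_antisym: "keys a \<subseteq> V \<Longrightarrow> keys b \<subseteq> V \<Longrightarrow> le a b \<Longrightarrow> le b a \<Longrightarrow> a = b"
  using monomial_order_conjuncts[THEN conjunct2, THEN conjunct1] by blast

lemma monomial_order_trans:
  "keys a \<subseteq> V \<Longrightarrow> keys b \<subseteq> V \<Longrightarrow> keys c \<subseteq> V \<Longrightarrow> le a b \<Longrightarrow> le b c \<Longrightarrow> le a c"
  using monomial_order_conjuncts[THEN conjunct2, THEN conjunct2, THEN conjunct1] by blast

lemma monomial_order_total: "keys a \<subseteq> V \<Longrightarrow> keys b \<subseteq> V \<Longrightarrow> le a b \<or> le b a"
  using monomial_order_conjuncts[THEN conjunct2, THEN conjunct2, THEN conjunct2, THEN conjunct1] by blast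

lemma monomial_order_add_right:
  "keys a \<subseteq> V \<Longrightarrow> keys b \<subseteq> V \<Longrightarrow> keys c \<subseteq> V \<Longrightarrow> le a b \<Longrightarrow> le (a + c) (b + c)"
  using monomial_order_conjuncts[THEN conjunct2, THEN conjunct2, THEN conjunct2, THEN conjunct2, THEN conjunct1] by blast

lemma monomial_order_ex_least:
  "S \<subseteq> {a. keys a \<subseteq> V} \<Longrightarrow> S \<noteq> {} \<Longrightarrow> \<exists>a\<in>S. \<forall>b\<in>S. le a b"
  using monomial_order_conjuncts[THEN conjunct2, THEN conjunct2, THEN conjunct2, THEN conjunct2, THEN conjunct2] by blast

lemma monomial_order_ex_max:
  "finite F \<Longrightarrow> F \<noteq> {} \<Longrightarrow> \<forall>a\<in>F. keys a \<subseteq> V \<Longrightarrow> \<exists>a\<in>F. \<forall>b\<in>F. le b a"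
proof (induction F rule: finite_ne_induct)
  case (singleton x)
  then show ?case using monomial_order_refl by auto
next
  case (insert x F)
  then obtain m where m: "m \<in> F" "\<forall>b\<in>F. le b m" by auto
  show ?case
  proof (cases "le m x")
    case True
    then show ?thesis using m insert.prems monomial_order_trans monomial_order_refl
      by (metis insert_iff)
  next
    case False
    then have "le x m" using monomial_order_total insert.prems m(1) by blast
    then show ?thesis using m by auto
  qed
qed

lemma lead_mon_eqI:
  fixes f :: cpoly
  assumes V: "\<forall>a\<in>keys f. keys a \<subseteq> V"
    and u: "u \<in> keys f" "\<forall>b\<in>keys f. le b u"
  shows "lead_mon le f = u"
  unfolding lead_mon_def
proof (rule the_equality)
  show "u \<in> keys f \<and> (\<forall>b\<in>keys f. le b u)" using u by blast
next
  fix a assume "a \<in> keys f \<and> (\<forall>b\<in>keys f. le b a)"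
  then show "a = u" using u V monomial_order_antisym by blast
qed

lemma lead_mon_binomial:
  assumes "p \<noteq> q" "keys p \<subseteq> V" "keys q \<subseteq> V" "le q p"
  shows "lead_mon le (single p (1::complex) - single q 1) = p"
  using assms(2-) by (intro lead_mon_eqI) (auto simp: keys_binomial[OF assms(1)] monomial_order_refl)

end

definition toric_exp :: "nat \<Rightarrow> mon \<Rightarrow> mon" where
  "toric_exp n a = (\<Sum>i\<in>{1..2*n}. \<Sum>_\<in>{..<lookup a i}. scode n i)"

lemma lookup_toric_exp:
  "lookup (toric_exp n a) c = (\<Sum>i\<in>{1..2*n}. lookup a i * lookup (scode n i) c)"
  unfolding toric_exp_def lookup_sum by simp

lemma toric_exp_add: "toric_exp n (a + b) = toric_exp n a + toric_exp n b"
  by (rule poly_mapping_eqI) (simp add: lookup_toric_exp lookup_add sum.distrib algebra_simps)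

lemma lookup_ev: "lookup (ev k) c = (if k = c then 1 else 0)"
  by (simp add: ev_def lookup_single when_def)

lemma keys_ev: "keys (ev k) = {k}"
  by (simp add: ev_def)

lemma toric_exp_ev:
  assumes "p \<in> {1..2*n}"
  shows "toric_exp n (ev p) = scode n p"
proof (rule poly_mapping_eqI)
  fix c
  have "lookup (toric_exp n (ev p)) c = (\<Sum>i\<in>{1..2*n}. if i = p then lookup (scode n p) c else 0)"
    unfolding lookup_toric_exp by (intro sum.cong) (auto simp: lookup_ev)
  then show "lookup (toric_exp n (ev p)) c = lookup (scode n p) c"
    using assms by simp
qed

lemma single_one_power:
  "single (m::mon) (1::complex) ^ k = single (\<Sum>_\<in>{..<k}. m) 1"
  by (induction k) (simp_all add: mult_single add.commute del: sum_constant)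

lemma prod_single_one:
  "finite A \<Longrightarrow> (\<Prod>i\<in>A. single (g i :: mon) (1::complex)) = single (\<Sum>i\<in>A. g i) 1"
  by (induction A rule: finite_induct) (simp_all add: mult_single)

lemma toric_hom_eq_sum:
  "toric_hom n f = (\<Sum>a\<in>keys f. single (toric_exp n a) (lookup f a))"
  unfolding toric_hom_def
  by (simp add: single_one_power prod_single_one mult_single toric_exp_def del: sum_constant)

lemma toric_kernel_fiber_partner:
  assumes "toric_hom n f = 0" "u \<in> keys f"
  shows "\<exists>a\<in>keys f. a \<noteq> u \<and> toric_exp n a = toric_exp n u"
proof (rule ccontr)
  assume no_partner: "\<not> ?thesis"
  have "0 = lookup (toric_hom n f) (toric_exp n u)" using assms by simp
  also have "\<dots> = (\<Sum>a\<in>keys f. lookup f a when toric_exp n a = toric_exp n u)"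
    by (simp add: toric_hom_eq_sum lookup_sum lookup_single)
  also have "\<dots> = (\<Sum>a\<in>{u}. lookup f a when toric_exp n a = toric_exp n u)"
    using no_partner assms(2) by (intro sum.mono_neutral_right) auto
  also have "\<dots> = lookup f u" by simp
  finally show False using assms(2) by (simp add: in_keys_iff)
qed

lemma binomial_in_toric_ideal:
  assumes "p \<noteq> q" "keys p \<subseteq> {1..2*n}" "keys q \<subseteq> {1..2*n}" "toric_exp n p = toric_exp n q"
  shows "single p 1 - single q 1 \<in> toric_ideal n"
proof -
  have "toric_hom n (single p 1 - single q 1)
      = single (toric_exp n p) 1 + single (toric_exp n q) (-1)"
    unfolding toric_hom_eq_sum keys_binomial[OF assms(1)] using assms(1)
    by (simp add: lookup_minus lookup_single)
  also have "\<dots> = 0" by (simp add: assms(4) flip: single_add)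
  finally show ?thesis
    using assms by (simp add: toric_ideal_def polys_in_def keys_binomial)
qed

lemma sum_eq_imp_ex_less:
  fixes f g :: "'a \<Rightarrow> 'b::{ordered_cancel_comm_monoid_add, linorder}"
  assumes "finite A" "sum f A = sum g A" "x \<in> A" "f x \<noteq> g x"
  shows "\<exists>y\<in>A. f y < g y"
proof (rule ccontr)
  assume no_less: "\<not> (\<exists>y\<in>A. f y < g y)"
  then have "\<forall>y\<in>A. g y \<le> f y" by auto
  moreover have "g x < f x" using no_less assms(3,4) by auto
  ultimately have "sum g A < sum f A" using assms(1,3) by (intro sum_strict_mono_ex1) auto
  then show False using assms(2) by simp
qed

definition column_sum :: "nat \<Rightarrow> mon \<Rightarrow> nat \<Rightarrow> nat" where
  "column_sum n a k = lookup a k + lookup a (n+k)"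

definition top_row_sum :: "nat \<Rightarrow> mon \<Rightarrow> nat" where
  "top_row_sum n a = (\<Sum>k\<in>{1..n}. lookup a k)"

lemma sum_atLeastAtMost_double:
  fixes n :: nat
  shows "(\<Sum>i\<in>{1..2*n}. g i) = (\<Sum>k\<in>{1..n}. g k + (g (n+k) :: 'a::comm_monoid_add))"
proof -
  have "(\<Sum>i\<in>{1..n+n}. g i) = (\<Sum>i\<in>{1..n}. g i) + (\<Sum>i\<in>{n+1..n+n}. g i)"
    by (rule sum.ub_add_nat[of 1 n g n]) simp
  also have "(\<Sum>i\<in>{n+1..n+n}. g i) = (\<Sum>k\<in>{1..n}. g (n+k))"
    using sum.shift_bounds_cl_nat_ivl[of g 1 n n] by (simp add: add.commute)
  finally show ?thesis by (simp add: sum.distrib mult_2)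
qed

lemma lookup_toric_exp_columns:
  "lookup (toric_exp n a) c =
     (\<Sum>k\<in>{1..n}. lookup a k * lookup (scode n k) c + lookup a (n+k) * lookup (scode n (n+k)) c)"
  unfolding lookup_toric_exp by (rule sum_atLeastAtMost_double)

lemma lookup_scode_columns:
  assumes "1 \<le> k" "k \<le> n"
  shows "lookup (scode n k) (Suc 0) = 1" "lookup (scode n (n+k)) (Suc 0) = 0"
    and "lookup (scode n k) (Suc n) = 1" "lookup (scode n (n+k)) (Suc n) = 1"
    and "1 \<le> l \<Longrightarrow> l < n \<Longrightarrow> lookup (scode n k) (Suc l) = (if k = l then 1 else 0)"
    and "1 \<le> l \<Longrightarrow> l < n \<Longrightarrow> lookup (scode n (n+k)) (Suc l) = (if k = l then 1 else 0)"
  using assms by (auto simp: scode_def lookup_add lookup_ev)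

lemma toric_exp_fiber_margins:
  assumes "toric_exp n a = toric_exp n b"
  shows "top_row_sum n a = top_row_sum n b"
    and "\<forall>k\<in>{1..n}. column_sum n a k = column_sum n b k"
proof -
  have top: "lookup (toric_exp n x) (Suc 0) = top_row_sum n x" for x
    unfolding lookup_toric_exp_columns top_row_sum_def
    by (intro sum.cong) (auto simp: lookup_scode_columns)
  have column: "lookup (toric_exp n x) (Suc l) = column_sum n x l" if "1 \<le> l" "l < n" for x l
  proof -
    have "lookup (toric_exp n x) (Suc l) = (\<Sum>k\<in>{1..n}. if k = l then column_sum n x k else 0)"
      unfolding lookup_toric_exp_columns column_sum_def
      using that by (intro sum.cong) (auto simp: lookup_scode_columns)
    then show ?thesis using that by simp
  qed
  have total: "lookup (toric_exp n x) (Suc n) = (\<Sum>k\<in>{1..n}. column_sum n x k)" for x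
    unfolding lookup_toric_exp_columns column_sum_def
    by (intro sum.cong) (auto simp: lookup_scode_columns)
  show "top_row_sum n a = top_row_sum n b" using top assms by metis
  have lower: "column_sum n a k = column_sum n b k" if "1 \<le> k" "k < n" for k
    using column[OF that] assms by metis
  show "\<forall>k\<in>{1..n}. column_sum n a k = column_sum n b k"
  proof (cases "n = 0")
    case False
    have "{1..n} = insert n {1..<n}" using False by auto
    moreover have "(\<Sum>k\<in>{1..<n}. column_sum n a k) = (\<Sum>k\<in>{1..<n}. column_sum n b k)"
      using lower by (intro sum.cong) auto
    ultimately have "column_sum n a n = column_sum n b n"
      using total[of a] total[of b] assms by simp
    then show ?thesis using lower by (metis atLeastAtMost_iff le_neq_implies_less)
  qed simp
qed

lemma same_margins_ex_exchange:
  assumes "keys a \<subseteq> {1..2*n}" "keys b \<subseteq> {1..2*n}" "a \<noteq> b"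
    and top: "top_row_sum n a = top_row_sum n b"
    and columns: "\<forall>k\<in>{1..n}. column_sum n a k = column_sum n b k"
  obtains i j where "i \<in> {1..n}" "j \<in> {1..n}"
    "lookup b i < lookup a i" "lookup b (n+j) < lookup a (n+j)"
    "lookup a j < lookup b j" "lookup a (n+i) < lookup b (n+i)"
proof -
  have "\<exists>k\<in>{1..n}. lookup b k \<noteq> lookup a k"
  proof (rule ccontr)
    assume "\<not> ?thesis"
    then have top_eq: "lookup a k = lookup b k" if "k \<in> {1..n}" for k
      using that by auto
    have "lookup a c = lookup b c" for c
    proof -
      consider "c \<in> {1..n}" | "c - n \<in> {1..n}" "c = n + (c - n)" | "c \<notin> {1..2*n}" by fastforce
      then show ?thesis
      proof cases
        case 2
        then show ?thesis using top_eq[of "c - n"] columns by (metis column_sum_def add_left_cancel)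
      next
        case 3
        then show ?thesis using assms(1,2) by (metis in_mono not_in_keys_iff_lookup_eq_zero)
      qed (rule top_eq)
    qed
    then show False using assms(3) by (metis poly_mapping_eqI)
  qed
  then obtain k where k: "k \<in> {1..n}" "lookup b k \<noteq> lookup a k" by blast
  have top': "sum (lookup b) {1..n} = sum (lookup a) {1..n}"
    using top by (simp add: top_row_sum_def)
  obtain i where i: "i \<in> {1..n}" "lookup b i < lookup a i"
    using sum_eq_imp_ex_less[OF _ top' k] by auto
  obtain j where j: "j \<in> {1..n}" "lookup a j < lookup b j"
    using sum_eq_imp_ex_less[OF _ top'[symmetric] k(1)] k(2) by auto
  have "column_sum n a i = column_sum n b i" "column_sum n a j = column_sum n b j"
    using columns i(1) j(1) by auto
  with i j show thesis
    unfolding column_sum_def by (intro that[of i j]) auto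
qed

definition cross :: "nat \<Rightarrow> nat \<Rightarrow> nat \<Rightarrow> mon" where
  "cross n i j = ev i + ev (n+j)"

lemma lookup_cross: "lookup (cross n i j) c = (if c = i then 1 else 0) + (if c = n+j then 1 else 0)"
  by (auto simp: cross_def lookup_add lookup_ev)

lemma keys_cross_subset: "i \<in> {1..n} \<Longrightarrow> j \<in> {1..n} \<Longrightarrow> keys (cross n i j) \<subseteq> {1..2*n}"
  unfolding cross_def using keys_add[of "ev i" "ev (n+j)"] by (auto simp: keys_ev)

lemma cross_swap_neq: "i \<in> {1..n} \<Longrightarrow> j \<in> {1..n} \<Longrightarrow> i \<noteq> j \<Longrightarrow> cross n i j \<noteq> cross n j i"
proof
  assume "i \<in> {1..n}" "j \<in> {1..n}" "i \<noteq> j" "cross n i j = cross n j i"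
  then have "lookup (cross n i j) i = lookup (cross n j i) i" by simp
  with \<open>i \<in> {1..n}\<close> \<open>j \<in> {1..n}\<close> \<open>i \<noteq> j\<close> show False by (simp add: lookup_cross)
qed

lemma scode_top_eq: "k \<in> {1..n} \<Longrightarrow> scode n k = ev 1 + scode n (n+k)"
  unfolding scode_def by (auto simp: add.assoc)

lemma toric_exp_cross_swap:
  assumes "i \<in> {1..n}" "j \<in> {1..n}"
  shows "toric_exp n (cross n i j) = toric_exp n (cross n j i)"
proof -
  have "toric_exp n (cross n i j) = ev 1 + scode n (n+i) + scode n (n+j)"
    using assms by (simp add: cross_def toric_exp_add toric_exp_ev scode_top_eq)
  moreover have "toric_exp n (cross n j i) = ev 1 + scode n (n+j) + scode n (n+i)"
    using assms by (simp add: cross_def toric_exp_add toric_exp_ev scode_top_eq)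
  ultimately show ?thesis by (simp add: ac_simps)
qed

lemma minor_eq_binomial:
  "var i * var (n+j) - var j * var (n+i) = single (cross n i j) 1 - single (cross n j i) 1"
  by (simp add: var_def cross_def mult_single)

lemma keys_diff_mon_subset: "keys (a - b :: mon) \<subseteq> keys a"
  by (auto simp: in_keys_iff lookup_minus)

lemma toric_fiber_least_exchange:
  assumes mo: "monomial_order {1..2*n} le"
    and a: "keys a \<subseteq> {1..2*n}" and b: "keys b \<subseteq> {1..2*n}"
    and "a \<noteq> b" and fiber: "toric_exp n a = toric_exp n b"
    and least: "\<And>c. keys c \<subseteq> {1..2*n} \<Longrightarrow> toric_exp n c = toric_exp n b \<Longrightarrow> le b c"
  shows "\<exists>i\<in>{1..n}. \<exists>j\<in>{1..n}. i \<noteq> j \<and> le (cross n j i) (cross n i j) \<and> mon_dvd (cross n i j) a"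
proof -
  obtain i j where ij: "i \<in> {1..n}" "j \<in> {1..n}"
    and a_big: "lookup b i < lookup a i" "lookup b (n+j) < lookup a (n+j)"
    and b_big: "lookup a j < lookup b j" "lookup a (n+i) < lookup b (n+i)"
    using same_margins_ex_exchange[OF a b \<open>a \<noteq> b\<close> toric_exp_fiber_margins[OF fiber]] .
  have "i \<noteq> j" using a_big(1) b_big(1) by auto
  note keys_P = keys_cross_subset[OF ij(1,2)] and keys_Q = keys_cross_subset[OF ij(2,1)]
  have "a = cross n i j + (a - cross n i j)"
    using a_big ij by (intro poly_mapping_eqI) (auto simp: lookup_add lookup_minus lookup_cross)
  then have P_dvd_a: "mon_dvd (cross n i j) a" unfolding mon_dvd_def by blast
  have b_split: "b = cross n j i + (b - cross n j i)"
    using b_big ij by (intro poly_mapping_eqI) (auto simp: lookup_add lookup_minus lookup_cross)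
  have "le (cross n j i) (cross n i j)"
  proof (rule ccontr)
    assume "\<not> le (cross n j i) (cross n i j)"
    then have PQ: "le (cross n i j) (cross n j i)"
      using monomial_order_total[OF mo keys_P keys_Q] by blast
    define b' where "b' = cross n i j + (b - cross n j i)"
    have keys_rest: "keys (b - cross n j i) \<subseteq> {1..2*n}"
      using keys_diff_mon_subset[of b] b by (rule order_trans)
    have keys_b': "keys b' \<subseteq> {1..2*n}"
      unfolding b'_def using keys_add[of "cross n i j"] keys_P keys_rest by blast
    have "le b' b"
      using monomial_order_add_right[OF mo keys_P keys_Q keys_rest PQ]
      unfolding b'_def b_split[symmetric] .
    moreover have "toric_exp n b' = toric_exp n b"
      unfolding b'_def by (subst (2) b_split) (simp add: toric_exp_add toric_exp_cross_swap[OF ij])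
    then have "le b b'" using least keys_b' by blast
    ultimately have "b' = b" using monomial_order_antisym[OF mo keys_b' b] by blast
    then have "cross n i j = cross n j i" unfolding b'_def by (subst (asm) (2) b_split) simp
    then show False using cross_swap_neq ij \<open>i \<noteq> j\<close> by blast
  qed
  then show ?thesis using ij \<open>i \<noteq> j\<close> P_dvd_a by blast
qed

lemma lead_mon_toric_ideal_ex_cross:
  assumes mo: "monomial_order {1..2*n} le" and f: "f \<in> toric_ideal n" "f \<noteq> 0"
  shows "\<exists>i\<in>{1..n}. \<exists>j\<in>{1..n}. i \<noteq> j \<and> le (cross n j i) (cross n i j)
           \<and> mon_dvd (cross n i j) (lead_mon le f)"
proof -
  have keys_f: "\<forall>a\<in>keys f. keys a \<subseteq> {1..2*n}"
    using f(1) by (auto simp: toric_ideal_def polys_in_def)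
  obtain u where u: "u \<in> keys f" "\<forall>c\<in>keys f. le c u"
    using monomial_order_ex_max[OF mo _ _ keys_f] f(2) by auto
  have lead: "lead_mon le f = u" using lead_mon_eqI[OF mo keys_f u] .
  obtain c where c: "c \<in> keys f" "c \<noteq> u" "toric_exp n c = toric_exp n u"
    using toric_kernel_fiber_partner[OF _ u(1)] f(1) by (auto simp: toric_ideal_def)
  let ?fiber = "{c. keys c \<subseteq> {1..2*n} \<and> toric_exp n c = toric_exp n u}"
  obtain b where b: "b \<in> ?fiber" "\<forall>c\<in>?fiber. le b c"
    using monomial_order_ex_least[OF mo, of ?fiber] keys_f u(1) by blast
  have "b \<noteq> u"
  proof
    assume "b = u"
    then have "le u c" using b(2) c keys_f by blast
    then show False using monomial_order_antisym[OF mo] u c keys_f by blast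
  qed
  then show ?thesis
    using toric_fiber_least_exchange[OF mo, of u b] keys_f u(1) b lead by auto
qed

lemma finite_U: "finite (U n)"
proof (rule finite_subset)
  show "U n \<subseteq> (\<lambda>(i, j). var i * var (n+j) - var j * var (n+i)) ` ({1..n} \<times> {1..n})"
    unfolding U_def by force
qed simp

lemma U_subset_toric_ideal: "U n \<subseteq> toric_ideal n"
proof
  fix g assume "g \<in> U n"
  then obtain i j where ij: "i \<in> {1..n}" "j \<in> {1..n}" "i < j"
    and g: "g = single (cross n i j) 1 - single (cross n j i) 1"
    unfolding U_def minor_eq_binomial by auto
  show "g \<in> toric_ideal n"
    unfolding g using ij
    by (intro binomial_in_toric_ideal cross_swap_neq keys_cross_subset toric_exp_cross_swap) auto
qed

lemma U_ex_lead_mon_cross: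
  assumes mo: "monomial_order {1..2*n} le" and ij: "i \<in> {1..n}" "j \<in> {1..n}" "i \<noteq> j"
    and QP: "le (cross n j i) (cross n i j)"
  shows "\<exists>g\<in>U n. g \<noteq> 0 \<and> lead_mon le g = cross n i j"
proof -
  let ?B = "single (cross n i j) (1::complex) - single (cross n j i) 1"
  have PQ: "cross n i j \<noteq> cross n j i" using cross_swap_neq[OF ij] .
  have B_ne_0: "?B \<noteq> 0" using keys_binomial[OF PQ] by fastforce
  have lead_B: "lead_mon le ?B = cross n i j"
    using lead_mon_binomial[OF mo PQ keys_cross_subset[OF ij(1,2)] keys_cross_subset[OF ij(2,1)] QP] .
  have "?B \<in> U n \<or> - ?B \<in> U n"
  proof (cases "i < j")
    case True
    then show ?thesis using ij unfolding U_def minor_eq_binomial by (intro disjI1) auto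
  next
    case False
    then have "j < i" using ij(3) by simp
    then show ?thesis using ij unfolding U_def minor_eq_binomial minus_diff_eq by (intro disjI2) auto
  qed
  then show ?thesis using B_ne_0 lead_B lead_mon_uminus[of le ?B] neg_equal_0_iff_equal by metis
qed

theorem mainTheorem2:
  fixes n :: nat
  assumes "1 \<le> n"
  shows "universal_groebner_basis {1..2*n} (toric_ideal n) (U n)"
  unfolding universal_groebner_basis_def groebner_basis_def
proof (intro allI impI conjI ballI finite_U U_subset_toric_ideal)
  fix le f assume mo: "monomial_order {1..2*n} le" and f: "f \<in> toric_ideal n" "f \<noteq> 0"
  obtain i j where ij: "i \<in> {1..n}" "j \<in> {1..n}" "i \<noteq> j"
    and QP: "le (cross n j i) (cross n i j)" and dvd: "mon_dvd (cross n i j) (lead_mon le f)"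
    using lead_mon_toric_ideal_ex_cross[OF mo f] by blast
  then show "\<exists>g\<in>U n. g \<noteq> 0 \<and> mon_dvd (lead_mon le g) (lead_mon le f)"
    using U_ex_lead_mon_cross[OF mo ij QP] by auto
qed

end
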